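(* Assume Schanuel's conjecture $(S)$. Let $\alpha,\beta,\gamma$ be nonzero complex numbers with $\alpha\neq 1$ and $\beta^{\gamma}\neq 1$. Suppose that at least one of $\alpha$ and $\beta^{\gamma}$ is irrational, and at least one of them is algebraic. If $\beta^{\gamma\alpha}$ is algebraic, then $\alpha^{\beta^{\gamma}}$ is transcendental.
   Context: Schanuel's conjecture $(S)$: if $\alpha_1,\dots,\alpha_n\in\mathbb{C}$ are linearly independent over $\mathbb{Q}$, then the transcendence degree of $\mathbb{Q}(\alpha_1,\dots,\alpha_n,e^{\alpha_1},\dots,e^{\alpha_n})$ over $\mathbb{Q}$ is at least $n$. Powers: fix a determination $\log\beta$ and $\log\alpha$; $\beta^{\gamma}:=e^{\gamma\log\beta}$, $\beta^{\gamma\alpha}:=e^{\gamma\alpha\log\beta}$ (i.e. $(\beta^\gamma)^\alpha$ computed with $\log(\beta^\gamma)=\gamma\log\beta$), and $\alpha^{\beta^{\gamma}}:=e^{\beta^{\gamma}\log\alpha}$. *)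

theory Defs
  imports "HOL-Analysis.Analysis" "HOL-Computational_Algebra.Polynomial"
begin

definition Q_lin_indep :: "nat \<Rightarrow> (nat \<Rightarrow> complex) \<Rightarrow> bool" where
  "Q_lin_indep n a \<longleftrightarrow>
     (\<forall>q :: nat \<Rightarrow> rat. (\<Sum>i<n. of_rat (q i) * a i) = 0 \<longrightarrow> (\<forall>i<n. q i = 0))"

text \<open>A polynomial is given by a finite set M of monomials (exponent functions
  supported in T) and rational coefficients c.\<close>
definition Q_alg_indep :: "complex set \<Rightarrow> bool" where
  "Q_alg_indep T \<longleftrightarrow> finite T \<and>
     (\<forall>(M :: (complex \<Rightarrow> nat) set) (c :: (complex \<Rightarrow> nat) \<Rightarrow> rat).
        finite M \<longrightarrow> (\<forall>m\<in>M. \<forall>x. m x \<noteq> 0 \<longrightarrow> x \<in> T) \<longrightarrow>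
        (\<Sum>m\<in>M. of_rat (c m) * (\<Prod>x\<in>T. x ^ m x)) = 0 \<longrightarrow> (\<forall>m\<in>M. c m = 0))"

definition trdeg_Q_ge :: "complex set \<Rightarrow> nat \<Rightarrow> bool" where
  "trdeg_Q_ge S n \<longleftrightarrow> (\<exists>T\<subseteq>S. card T = n \<and> Q_alg_indep T)"

definition Schanuel :: bool where
  "Schanuel \<longleftrightarrow>
     (\<forall>(n::nat) (a :: nat \<Rightarrow> complex). Q_lin_indep n a \<longrightarrow>
        trdeg_Q_ge (a ` {..<n} \<union> (\<lambda>i. exp (a i)) ` {..<n}) n)"

end

theory Submission
  imports Defs
begin

(* Put  x = gamma * log beta,  b = exp x = beta^gamma  and  L = log alpha.
   The hypotheses say that exp (alpha * x) is algebraic, and we assume for a contradiction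
   that exp (b * L) = alpha^(beta^gamma) is algebraic as well.  The situation is symmetric
   under swapping (alpha, L) with (b, x), so we may assume that alpha is algebraic.
   - If alpha is rational, then b = exp x is algebraic, and Schanuel's conjecture for the
     pair L, b * L (the Gelfond-Schneider theorem) makes exp (b * L) transcendental.
   - If alpha is irrational, Gelfond-Schneider shows that b is transcendental, and
     Schanuel's conjecture applied to a maximal Q-linearly independent sublist of
     alpha * x, L, x, b * L produces an algebraically independent set which, after
     discarding the algebraic exponentials, must satisfy an algebraic relation. *)

interpretation Qvec: vector_space "\<lambda>(r::rat) (z::complex). of_rat r * z"
  by unfold_locales (simp_all add: algebra_simps of_rat_add of_rat_mult)

lemma Qvec_span_scale: "z \<in> Qvec.span S \<Longrightarrow> of_rat c * z \<in> Qvec.span S"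
  using Qvec.span_scale[of z S c] by simp

lemma Qvec_span_mult:
  fixes A B :: "complex set"
  assumes A: "finite A" and B: "finite B" and u: "u \<in> Qvec.span A" and v: "v \<in> Qvec.span B"
  shows "u * v \<in> Qvec.span ((\<lambda>(a, b). a * b) ` (A \<times> B))"
proof -
  obtain r where r: "u = (\<Sum>a\<in>A. of_rat (r a) * a)" using u Qvec.span_finite[OF A] by auto
  obtain s where s: "v = (\<Sum>b\<in>B. of_rat (s b) * b)" using v Qvec.span_finite[OF B] by auto
  have "u * v = (\<Sum>a\<in>A. \<Sum>b\<in>B. of_rat (r a * s b) * (a * b))"
    by (simp add: r s sum_product of_rat_mult algebra_simps)
  also have "\<dots> \<in> Qvec.span ((\<lambda>(a, b). a * b) ` (A \<times> B))"
    by (intro Qvec.span_sum Qvec_span_scale Qvec.span_base) auto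
  finally show ?thesis .
qed

lemma Qvec_span_list:
  assumes "v \<in> Qvec.span (set zs)"
  shows "\<exists>q. v = (\<Sum>i<length zs. of_rat (q i) * zs ! i)"
  using assms
proof (induction zs arbitrary: v)
  case Nil
  then show ?case by (simp add: Qvec.span_empty)
next
  case (Cons z zs)
  obtain k where "v - of_rat k * z \<in> Qvec.span (set zs)"
    using Cons.prems Qvec.span_insert by auto
  then obtain q where q: "v - of_rat k * z = (\<Sum>i<length zs. of_rat (q i) * zs ! i)"
    using Cons.IH by blast
  have "v = (\<Sum>i<length (z # zs). of_rat (case_nat k q i) * (z # zs) ! i)"
    unfolding length_Cons sum.lessThan_Suc_shift using q by (simp add: algebra_simps)
  then show ?case by blast
qed

section \<open>Algebraic numbers form a field\<close>

text \<open>A number with two equal powers is a root of unity or zero, hence algebraic.\<close>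
lemma algebraic_if_powers_collide:
  fixes y :: complex
  assumes "i < j" and "y ^ i = y ^ j"
  shows "algebraic y"
proof (rule algebraicI'[of "monom 1 j - monom 1 i"])
  show "coeff (monom 1 j - monom 1 i) k \<in> \<rat>" for k
    by (simp add: coeff_monom)
  have "coeff (monom (1::complex) j - monom 1 i) j = 1"
    using assms(1) by (simp add: coeff_monom)
  then show "monom 1 j - monom 1 i \<noteq> (0 :: complex poly)" by (metis coeff_0 zero_neq_one)
  show "poly (monom 1 j - monom 1 i) y = 0"
    using assms(2) by (simp add: poly_monom)
qed

text \<open>If all powers of y lie in a finite-dimensional Q-subspace, then among
  1, y, ..., y^n (n the number of spanning vectors) there is a linear relation.\<close>
lemma algebraic_if_powers_in_finite_span:
  fixes y :: complex
  assumes F: "finite F" and powers: "\<And>m. y ^ m \<in> Qvec.span F"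
  shows "algebraic y"
proof (cases "inj_on (\<lambda>m. y ^ m) {..card F}")
  case False
  then obtain i j where "i < j" "y ^ i = y ^ j"
    unfolding inj_on_def by (metis linorder_neqE_nat)
  then show ?thesis by (rule algebraic_if_powers_collide)
next
  case inj: True
  define P where "P = (\<lambda>m. y ^ m) ` {..card F}"
  have "Qvec.dependent P"
  proof (rule ccontr)
    assume "\<not> Qvec.dependent P"
    moreover have "P \<subseteq> Qvec.span F" using powers by (auto simp: P_def)
    ultimately have "card P \<le> card F" using Qvec.independent_span_bound[OF F] by blast
    with inj show False by (simp add: P_def card_image)
  qed
  then obtain u where u: "\<exists>v\<in>P. u v \<noteq> 0" "(\<Sum>v\<in>P. of_rat (u v) * v) = 0"
    using Qvec.dependent_finite[of P] by (auto simp: P_def)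
  define p where "p = (\<Sum>m\<le>card F. monom (of_rat (u (y ^ m)) :: complex) m)"
  have coeff_p: "coeff p k = (if k \<le> card F then of_rat (u (y ^ k)) else 0)" for k
    by (simp add: p_def coeff_sum coeff_monom)
  have "poly p y = (\<Sum>m\<le>card F. of_rat (u (y ^ m)) * y ^ m)"
    by (simp add: p_def poly_sum poly_monom)
  also have "\<dots> = (\<Sum>v\<in>P. of_rat (u v) * v)"
    unfolding P_def by (subst sum.reindex[OF inj]) simp
  finally have root: "poly p y = 0" using u by simp
  from u obtain k where k: "k \<le> card F" "u (y ^ k) \<noteq> 0" by (auto simp: P_def)
  then have "coeff p k \<noteq> 0" by (simp add: coeff_p)
  then have "p \<noteq> 0" by auto
  then show ?thesis using root by (intro algebraicI'[of p]) (simp_all add: coeff_p)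
qed

text \<open>Conversely, the powers of an algebraic number of degree d lie in the span of
  1, a, ..., a^(d-1): the minimal relation rewrites a^d in terms of lower powers.\<close>
lemma powers_in_finite_span_if_algebraic:
  fixes a :: complex
  assumes "algebraic a"
  obtains F where "finite F" "\<And>m. a ^ m \<in> Qvec.span F"
proof -
  obtain p where p: "\<forall>i. coeff p i \<in> \<rat>" "p \<noteq> 0" "poly p a = 0"
    using assms by (auto simp: algebraic_altdef)
  have "\<forall>i. \<exists>r. coeff p i = of_rat r" using p(1) by (auto elim: Rats_cases)
  then obtain \<rho> where \<rho>: "\<And>i. coeff p i = of_rat (\<rho> i)" by metis
  define d where "d = degree p"
  have "d > 0"
  proof (rule ccontr)
    assume "\<not> d > 0"
    then obtain c where "p = [:c:]" by (metis d_def degree_eq_zeroE gr0I)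
    with p(2,3) show False by simp
  qed
  have lead: "coeff p d \<noteq> 0" using p(2) by (simp add: d_def)
  have "(\<Sum>k<d. coeff p k * a ^ k) + coeff p d * a ^ d = 0"
    using p(3) by (simp add: poly_altdef d_def lessThan_Suc_atMost[symmetric])
  then have "a ^ d = - (\<Sum>k<d. coeff p k * a ^ k) / coeff p d"
    using lead by (simp add: field_simps eq_neg_iff_add_eq_0 add.commute)
  also have "\<dots> = (\<Sum>k<d. of_rat (- \<rho> k / \<rho> d) * a ^ k)"
    by (simp add: \<rho> sum_divide_distrib of_rat_divide of_rat_minus flip: sum_negf)
  finally have top_power: "a ^ d = (\<Sum>k<d. of_rat (- \<rho> k / \<rho> d) * a ^ k)" .
  define F where "F = (\<lambda>k. a ^ k) ` {..<d}"
  have "a ^ m \<in> Qvec.span F" for m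
  proof (induction m rule: less_induct)
    case (less m)
    show ?case
    proof (cases "m < d")
      case True
      then show ?thesis by (intro Qvec.span_base) (auto simp: F_def)
    next
      case False
      then have "a ^ m = a ^ (m - d) * a ^ d" by (simp flip: power_add)
      also have "\<dots> = (\<Sum>k<d. of_rat (- \<rho> k / \<rho> d) * a ^ (m - d + k))"
        by (simp add: top_power sum_distrib_left power_add algebra_simps)
      also have "\<dots> \<in> Qvec.span F"
        using False \<open>d > 0\<close> by (intro Qvec.span_sum Qvec_span_scale less) auto
      finally show ?thesis .
    qed
  qed
  then show ?thesis using that[of F] by (simp add: F_def)
qed

text \<open>Closure under products and sums: all powers of a * b and of a + b lie in the span of
  the finitely many products of a spanning vector for the powers of a with one for those of b.\<close>
lemma algebraic_mult:
  fixes a b :: complex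
  assumes "algebraic a" "algebraic b"
  shows "algebraic (a * b)"
proof -
  obtain A where A: "finite A" "\<And>m. a ^ m \<in> Qvec.span A"
    using powers_in_finite_span_if_algebraic[OF assms(1)] by blast
  obtain B where B: "finite B" "\<And>m. b ^ m \<in> Qvec.span B"
    using powers_in_finite_span_if_algebraic[OF assms(2)] by blast
  show ?thesis
    by (rule algebraic_if_powers_in_finite_span[of "(\<lambda>(a, b). a * b) ` (A \<times> B)"])
       (use A B Qvec_span_mult in \<open>auto simp: power_mult_distrib\<close>)
qed

lemma algebraic_add:
  fixes a b :: complex
  assumes "algebraic a" "algebraic b"
  shows "algebraic (a + b)"
proof -
  obtain A where A: "finite A" "\<And>m. a ^ m \<in> Qvec.span A"
    using powers_in_finite_span_if_algebraic[OF assms(1)] by blast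
  obtain B where B: "finite B" "\<And>m. b ^ m \<in> Qvec.span B"
    using powers_in_finite_span_if_algebraic[OF assms(2)] by blast
  have "(a + b) ^ m \<in> Qvec.span ((\<lambda>(a, b). a * b) ` (A \<times> B))" for m
  proof -
    have "(a + b) ^ m = (\<Sum>k\<le>m. of_rat (of_nat (m choose k)) * (a ^ k * b ^ (m - k)))"
      by (simp add: binomial_ring mult.assoc)
    also have "\<dots> \<in> Qvec.span ((\<lambda>(a, b). a * b) ` (A \<times> B))"
      by (intro Qvec.span_sum Qvec_span_scale Qvec_span_mult A B)
    finally show ?thesis .
  qed
  then show ?thesis
    by (intro algebraic_if_powers_in_finite_span[of "(\<lambda>(a, b). a * b) ` (A \<times> B)"]) (use A B in auto)
qed

lemma algebraic_of_rat: "algebraic (of_rat r :: complex)"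
  by (rule algebraicI'[of "[:- of_rat r, 1:]"]) (auto simp: coeff_pCons split: nat.splits)

lemma algebraic_power: "algebraic (a::complex) \<Longrightarrow> algebraic (a ^ n)"
  by (induction n) (auto intro: algebraic_mult)

lemma algebraic_divide: "algebraic (a::complex) \<Longrightarrow> algebraic b \<Longrightarrow> algebraic (a / b)"
  by (simp add: divide_inverse algebraic_mult algebraic_inverse)

text \<open>If exp z is algebraic, so is exp (r * z) for rational r: its d-th power
  (d the denominator of r) is an integer power of exp z.\<close>
lemma algebraic_exp_of_rat_mult:
  fixes z :: complex
  assumes "algebraic (exp z)"
  shows "algebraic (exp (of_rat r * z))"
proof -
  obtain n d where nd: "quotient_of r = (n, d)" by (cases "quotient_of r")
  have d: "d > 0" using quotient_of_denom_pos[OF nd] .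
  have "exp (of_rat r * z) ^ nat d = exp (of_nat (nat d) * (of_rat r * z))"
    by (rule exp_of_nat_mult[symmetric])
  also have "of_nat (nat d) * (of_rat r * z) = of_int n * z"
    using d by (simp add: quotient_of_div[OF nd] of_rat_divide)
  also have "exp (of_int n * z) = exp z powi n"
    by (simp add: exp_power_int)
  finally have power: "poly (monom 1 (nat d)) (exp (of_rat r * z)) = exp z powi n"
    by (simp add: poly_monom)
  have "algebraic (exp z powi n)"
    using assms by (auto simp: power_int_def intro: algebraic_power)
  then show ?thesis
    by (rule algebraic_root[OF _ power]) (use d in \<open>auto simp: coeff_monom degree_monom_eq\<close>)
qed

lemma algebraic_exp_span:
  fixes z :: complex
  assumes "z \<in> Qvec.span Z" and "\<And>w. w \<in> Z \<Longrightarrow> algebraic (exp w)"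
  shows "algebraic (exp z)"
  using assms(1)
proof (induction rule: Qvec.span_induct_alt)
  case base
  then show ?case by simp
next
  case (step c w y)
  then show ?case
    by (simp add: exp_add algebraic_mult algebraic_exp_of_rat_mult assms(2))
qed


section \<open>Relations among algebraically independent numbers\<close>

text \<open>f is a polynomial with rational coefficients in variables indexed by the finite set
  T, evaluated at an assignment nu of complex values to these variables; f id is its value
  at the elements of T themselves.\<close>
definition poly_expr :: "complex set \<Rightarrow> ((complex \<Rightarrow> complex) \<Rightarrow> complex) \<Rightarrow> bool" where
  "poly_expr T f \<longleftrightarrow> finite T \<and> (\<exists>(M :: (complex \<Rightarrow> nat) set) (c :: (complex \<Rightarrow> nat) \<Rightarrow> rat).
     finite M \<and> (\<forall>m\<in>M. \<forall>x. m x \<noteq> 0 \<longrightarrow> x \<in> T) \<and>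
     (\<forall>\<nu>. f \<nu> = (\<Sum>m\<in>M. of_rat (c m) * (\<Prod>x\<in>T. \<nu> x ^ m x))))"

lemma poly_expr_vanishes:
  assumes "Q_alg_indep T" "poly_expr T f" "f id = 0"
  shows "f \<nu> = 0"
proof -
  from assms(2) obtain M c where M: "finite M" "\<forall>m\<in>M. \<forall>x. m x \<noteq> 0 \<longrightarrow> x \<in> T"
    "\<And>\<nu>. f \<nu> = (\<Sum>m\<in>M. of_rat (c m) * (\<Prod>x\<in>T. \<nu> x ^ m x))"
    unfolding poly_expr_def by blast
  have "(\<Sum>m\<in>M. of_rat (c m) * (\<Prod>x\<in>T. x ^ m x)) = 0" using assms(3) M(3)[of id] by simp
  then have "\<forall>m\<in>M. c m = 0" using assms(1) M(1,2) unfolding Q_alg_indep_def by blast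
  then show ?thesis using M(3) by simp
qed

lemma poly_expr_const: "finite T \<Longrightarrow> poly_expr T (\<lambda>\<nu>. of_rat r)"
  unfolding poly_expr_def by (intro conjI exI[of _ "{\<lambda>_. 0}"] exI[of _ "\<lambda>_. r"]) simp_all

lemma poly_expr_Rats: "finite T \<Longrightarrow> c \<in> \<rat> \<Longrightarrow> poly_expr T (\<lambda>\<nu>. c)"
  by (auto elim!: Rats_cases intro: poly_expr_const)

lemma poly_expr_var:
  assumes "finite T" "t \<in> T"
  shows "poly_expr T (\<lambda>\<nu>. \<nu> t)"
proof -
  define mt :: "complex \<Rightarrow> nat" where "mt = (\<lambda>x. if x = t then 1 else 0)"
  have "(\<Prod>x\<in>T. \<nu> x ^ mt x) = (\<Prod>x\<in>T. if x = t then \<nu> x else 1)" for \<nu>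
    by (intro prod.cong) (auto simp: mt_def)
  also have "\<dots> \<nu> = \<nu> t" for \<nu> using assms by (simp add: prod.delta)
  finally have monomial: "\<And>\<nu>. (\<Prod>x\<in>T. \<nu> x ^ mt x) = \<nu> t" .
  show ?thesis unfolding poly_expr_def using assms
    by (intro conjI exI[of _ "{mt}"] exI[of _ "\<lambda>_. 1"]) (simp_all add: monomial, simp add: mt_def)
qed

lemma poly_expr_add:
  assumes "poly_expr T f" "poly_expr T g"
  shows "poly_expr T (\<lambda>\<nu>. f \<nu> + g \<nu>)"
proof -
  from assms(1) obtain M1 c1 where M1: "finite T" "finite M1" "\<forall>m\<in>M1. \<forall>x. m x \<noteq> 0 \<longrightarrow> x \<in> T"
    "\<And>\<nu>. f \<nu> = (\<Sum>m\<in>M1. of_rat (c1 m) * (\<Prod>x\<in>T. \<nu> x ^ m x))"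
    unfolding poly_expr_def by blast
  from assms(2) obtain M2 c2 where M2: "finite M2" "\<forall>m\<in>M2. \<forall>x. m x \<noteq> 0 \<longrightarrow> x \<in> T"
    "\<And>\<nu>. g \<nu> = (\<Sum>m\<in>M2. of_rat (c2 m) * (\<Prod>x\<in>T. \<nu> x ^ m x))"
    unfolding poly_expr_def by blast
  define c where "c m = (if m \<in> M1 then c1 m else 0) + (if m \<in> M2 then c2 m else 0)" for m
  have "f \<nu> + g \<nu> = (\<Sum>m\<in>M1 \<union> M2. of_rat (c m) * (\<Prod>x\<in>T. \<nu> x ^ m x))" for \<nu>
  proof -
    have "(\<Sum>m\<in>M1 \<union> M2. of_rat (c m) * (\<Prod>x\<in>T. \<nu> x ^ m x)) =
      (\<Sum>m\<in>M1 \<union> M2. (if m \<in> M1 then of_rat (c1 m) * (\<Prod>x\<in>T. \<nu> x ^ m x) else 0)) +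
      (\<Sum>m\<in>M1 \<union> M2. (if m \<in> M2 then of_rat (c2 m) * (\<Prod>x\<in>T. \<nu> x ^ m x) else 0))"
      unfolding sum.distrib[symmetric]
      by (intro sum.cong refl) (auto simp: c_def of_rat_add distrib_right)
    also have "\<dots> = f \<nu> + g \<nu>"
      using M1 M2 by (simp add: sum.If_cases Int_absorb1 Int_absorb2)
    finally show ?thesis by simp
  qed
  then show ?thesis unfolding poly_expr_def using M1 M2
    by (intro conjI exI[of _ "M1 \<union> M2"] exI[of _ c]) auto
qed

text \<open>For products, the monomials of the factors are added pairwise and the coefficients of
  equal sums are collected.\<close>
lemma poly_expr_mult:
  assumes "poly_expr T f" "poly_expr T g"
  shows "poly_expr T (\<lambda>\<nu>. f \<nu> * g \<nu>)"
proof -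
  from assms(1) obtain M1 c1 where M1: "finite T" "finite M1" "\<forall>m\<in>M1. \<forall>x. m x \<noteq> 0 \<longrightarrow> x \<in> T"
    "\<And>\<nu>. f \<nu> = (\<Sum>m\<in>M1. of_rat (c1 m) * (\<Prod>x\<in>T. \<nu> x ^ m x))"
    unfolding poly_expr_def by blast
  from assms(2) obtain M2 c2 where M2: "finite M2" "\<forall>m\<in>M2. \<forall>x. m x \<noteq> 0 \<longrightarrow> x \<in> T"
    "\<And>\<nu>. g \<nu> = (\<Sum>m\<in>M2. of_rat (c2 m) * (\<Prod>x\<in>T. \<nu> x ^ m x))"
    unfolding poly_expr_def by blast
  define h where "h = (\<lambda>(m1::complex\<Rightarrow>nat, m2::complex\<Rightarrow>nat). \<lambda>x. m1 x + m2 x)"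
  define S where "S = M1 \<times> M2"
  define c where "c m = (\<Sum>p\<in>{p\<in>S. h p = m}. c1 (fst p) * c2 (snd p))" for m
  have fS: "finite S" using M1 M2 by (simp add: S_def)
  have "f \<nu> * g \<nu> = (\<Sum>m\<in>h ` S. of_rat (c m) * (\<Prod>x\<in>T. \<nu> x ^ m x))" for \<nu>
  proof -
    have monomial_mult: "(\<Prod>x\<in>T. \<nu> x ^ h (m1, m2) x) = (\<Prod>x\<in>T. \<nu> x ^ m1 x) * (\<Prod>x\<in>T. \<nu> x ^ m2 x)"
      for m1 m2 by (simp add: h_def power_add prod.distrib)
    have "f \<nu> * g \<nu> = (\<Sum>(m1, m2)\<in>S. (of_rat (c1 m1) * (\<Prod>x\<in>T. \<nu> x ^ m1 x)) *
                                         (of_rat (c2 m2) * (\<Prod>x\<in>T. \<nu> x ^ m2 x)))"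
      unfolding M1(4) M2(3) sum_product S_def by (rule sum.cartesian_product)
    also have "\<dots> = (\<Sum>p\<in>S. of_rat (c1 (fst p) * c2 (snd p)) * (\<Prod>x\<in>T. \<nu> x ^ h p x))"
      by (intro sum.cong refl)
         (clarsimp simp only: monomial_mult of_rat_mult fst_conv snd_conv split: prod.splits;
          simp only: mult_ac)
    also have "\<dots> = (\<Sum>m\<in>h ` S. \<Sum>p\<in>{p\<in>S. h p = m}. of_rat (c1 (fst p) * c2 (snd p)) * (\<Prod>x\<in>T. \<nu> x ^ h p x))"
      by (rule sum.image_gen[OF fS])
    also have "\<dots> = (\<Sum>m\<in>h ` S. of_rat (c m) * (\<Prod>x\<in>T. \<nu> x ^ m x))"
      by (intro sum.cong refl) (simp add: c_def of_rat_sum sum_distrib_right)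
    finally show ?thesis .
  qed
  moreover have "\<forall>m\<in>h ` S. \<forall>x. m x \<noteq> 0 \<longrightarrow> x \<in> T"
    using M1(3) M2(2) by (force simp: h_def S_def)
  ultimately show ?thesis unfolding poly_expr_def using M1(1) fS by blast
qed

lemma poly_expr_sum:
  assumes "finite K" "finite T" "\<And>k. k \<in> K \<Longrightarrow> poly_expr T (f k)"
  shows "poly_expr T (\<lambda>\<nu>. \<Sum>k\<in>K. f k \<nu>)"
  using assms
proof (induction K rule: finite_induct)
  case empty
  then show ?case using poly_expr_const[of T 0] by simp
next
  case (insert k K)
  then show ?case using poly_expr_add[of T "f k" "\<lambda>\<nu>. \<Sum>k\<in>K. f k \<nu>"] by simp
qed

lemma poly_expr_power:
  assumes "poly_expr T f"
  shows "poly_expr T (\<lambda>\<nu>. f \<nu> ^ n)"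
proof (induction n)
  case 0
  then show ?case using poly_expr_const[of T 1] assms by (simp add: poly_expr_def)
next
  case (Suc n)
  then show ?case using poly_expr_mult[OF assms Suc] by simp
qed

text \<open>Indeed, clearing denominators in
  the minimal polynomial p of c = P/Q gives a polynomial expression vanishing at T, hence
  identically, which forces p to vanish everywhere.\<close>
lemma alg_indep_quotient_transcendental:
  assumes T: "Q_alg_indep T" and P: "poly_expr T P" and Q: "poly_expr T Q"
    and c: "algebraic c" and rel: "P id = c * Q id"
    and onto: "\<And>z. \<exists>\<nu>. P \<nu> = z \<and> Q \<nu> = 1"
  shows False
proof -
  obtain p where p: "\<forall>i. coeff p i \<in> \<rat>" "p \<noteq> 0" "poly p c = 0"
    using c by (auto simp: algebraic_altdef)
  define d where "d = degree p"
  define f where "f \<nu> = (\<Sum>k\<le>d. coeff p k * P \<nu> ^ k * Q \<nu> ^ (d - k))" for \<nu>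
  have "finite T" using T by (simp add: Q_alg_indep_def)
  then have "poly_expr T f" unfolding f_def
    by (intro poly_expr_sum poly_expr_mult poly_expr_power P Q poly_expr_Rats p(1)[rule_format]) auto
  have homogenized: "f \<nu> = Q \<nu> ^ d * poly p z" if "P \<nu> = z * Q \<nu>" for \<nu> z
  proof -
    have "f \<nu> = (\<Sum>k\<le>d. Q \<nu> ^ d * (coeff p k * z ^ k))"
      unfolding f_def that
      by (intro sum.cong refl) (auto simp: power_mult_distrib power_add[symmetric] algebra_simps)
    also have "\<dots> = Q \<nu> ^ d * poly p z" by (simp add: poly_altdef d_def sum_distrib_left)
    finally show ?thesis .
  qed
  have "f id = 0" using homogenized[of id c] rel p(3) by simp
  then have f0: "f \<nu> = 0" for \<nu> using poly_expr_vanishes[OF T \<open>poly_expr T f\<close>] by blast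
  have "poly p z = 0" for z
  proof -
    obtain \<nu> where "P \<nu> = z" "Q \<nu> = 1" using onto by blast
    then show ?thesis using homogenized[of \<nu> z] f0[of \<nu>] by simp
  qed
  then have "p = 0" using poly_all_0_iff_0 by blast
  with p(2) show False by simp
qed

lemma alg_indep_transcendental:
  assumes T: "Q_alg_indep T" and "t \<in> T"
  shows "\<not> algebraic t"
proof
  assume "algebraic t"
  have "finite T" using T by (simp add: Q_alg_indep_def)
  show False
    by (rule alg_indep_quotient_transcendental[OF T poly_expr_var[OF \<open>finite T\<close> \<open>t \<in> T\<close>]
          poly_expr_const[OF \<open>finite T\<close>, of 1] \<open>algebraic t\<close>])
       (auto intro!: exI[of _ "\<lambda>_. z" for z])
qed

lemma alg_indep_no_algebraic_ratio:
  assumes T: "Q_alg_indep T" and "u \<in> T" "w \<in> T" "u \<noteq> w" "algebraic c"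
  shows "u \<noteq> c * w"
proof
  assume "u = c * w"
  have "finite T" using T by (simp add: Q_alg_indep_def)
  show False
    by (rule alg_indep_quotient_transcendental[OF T poly_expr_var[OF \<open>finite T\<close> \<open>u \<in> T\<close>]
          poly_expr_var[OF \<open>finite T\<close> \<open>w \<in> T\<close>] \<open>algebraic c\<close>])
       (use assms \<open>u = c * w\<close> in \<open>auto intro!: exI[of _ "\<lambda>t. if t = u then z else 1" for z]\<close>)
qed

lemma alg_indep_no_shifted_product:
  assumes T: "Q_alg_indep T" and "u \<in> T" "v \<in> T" "w \<in> T" "u \<noteq> v" "u \<noteq> w" "algebraic c"
  shows "(u - of_rat r) * v \<noteq> c * w"
proof
  assume rel: "(u - of_rat r) * v = c * w"
  have "finite T" using T by (simp add: Q_alg_indep_def)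
  then have "poly_expr T (\<lambda>\<nu>. (\<nu> u + - 1 * of_rat r) * \<nu> v)"
    by (intro poly_expr_mult poly_expr_add poly_expr_var poly_expr_const poly_expr_Rats assms) auto
  then show False
    by (rule alg_indep_quotient_transcendental[OF T _ poly_expr_var[OF \<open>finite T\<close> \<open>w \<in> T\<close>]
          \<open>algebraic c\<close>])
       (use assms rel in \<open>auto intro!: exI[of _ "\<lambda>t. if t = u then of_rat r + z else 1" for z]\<close>)
qed

lemma alg_indep_keeps_one_multiple:
  assumes T: "Q_alg_indep T" and sub: "T \<subseteq> insert u (insert (a * u) R)"
    and "algebraic a" "a \<noteq> 1"
  obtains k where "k = 1 \<or> k = a" "T \<subseteq> insert (k * u) R"
proof -
  have "\<not> (u \<in> T \<and> a * u \<in> T)"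
  proof
    assume both: "u \<in> T \<and> a * u \<in> T"
    then have "u \<noteq> 0" using alg_indep_transcendental[OF T] by fastforce
    with \<open>a \<noteq> 1\<close> have "a * u \<noteq> u" by simp
    with both show False using alg_indep_no_algebraic_ratio[OF T] \<open>algebraic a\<close> by blast
  qed
  then show ?thesis using sub that[of 1] that[of a] by auto
qed

text \<open>Linear independence over Q of the entries of a list (counted with repetitions).\<close>
definition Q_lin_indep_list :: "complex list \<Rightarrow> bool" where
  "Q_lin_indep_list zs \<longleftrightarrow> Q_lin_indep (length zs) (nth zs)"

lemma Q_lin_indep_list_snoc:
  assumes indep: "Q_lin_indep_list zs" and w: "w \<notin> Qvec.span (set zs)"
  shows "Q_lin_indep_list (zs @ [w])"
  unfolding Q_lin_indep_list_def Q_lin_indep_def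
proof (rule allI, rule impI)
  fix q :: "nat \<Rightarrow> rat"
  let ?n = "length zs"
  assume "(\<Sum>i<length (zs @ [w]). of_rat (q i) * (zs @ [w]) ! i) = 0"
  then have rel: "(\<Sum>i<?n. of_rat (q i) * zs ! i) + of_rat (q ?n) * w = 0"
    by (simp add: nth_append)
  have "q ?n = 0"
  proof (rule ccontr)
    assume "q ?n \<noteq> 0"
    then have "w = - (\<Sum>i<?n. of_rat (q i) * zs ! i) / of_rat (q ?n)"
      using rel by (simp add: field_simps eq_neg_iff_add_eq_0 add.commute)
    also have "\<dots> = (\<Sum>i<?n. of_rat (- q i / q ?n) * zs ! i)"
      by (simp add: sum_divide_distrib of_rat_divide of_rat_minus flip: sum_negf)
    also have "\<dots> \<in> Qvec.span (set zs)"
      by (intro Qvec.span_sum Qvec_span_scale Qvec.span_base) simp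
    finally show False using w by contradiction
  qed
  with rel indep have "\<forall>i<?n. q i = 0"
    by (simp add: Q_lin_indep_list_def Q_lin_indep_def)
  with \<open>q ?n = 0\<close> show "\<forall>i<length (zs @ [w]). q i = 0"
    by (simp add: less_Suc_eq)
qed

lemma Q_lin_indep_list_single: "z \<noteq> 0 \<Longrightarrow> Q_lin_indep_list [z]"
  using Q_lin_indep_list_snoc[of "[]" z]
  by (simp add: Q_lin_indep_list_def Q_lin_indep_def Qvec.span_empty)

lemma schanuel_list:
  assumes "Schanuel" "Q_lin_indep_list zs"
  shows "\<exists>T\<subseteq>set zs \<union> exp ` set zs. card T = length zs \<and> Q_alg_indep T"
proof -
  have "nth zs ` {..<length zs} = set zs"
    by (auto simp: set_conv_nth)
  then show ?thesis
    using assms unfolding Schanuel_def trdeg_Q_ge_def Q_lin_indep_list_def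
    by (metis image_image)
qed

lemma subset_set_card_length:
  assumes "T \<subseteq> set xs" "card T = length xs"
  shows "T = set xs \<and> distinct xs"
proof -
  have "T = set xs"
    using card_seteq[OF _ assms(1)] assms(2) card_length by (metis List.finite_set)
  then show ?thesis using assms(2) card_distinct by auto
qed

text \<open>Algebraic numbers cannot occur in it, and u and a * u not both.\<close>
lemma schanuel_keep_one_multiple:
  assumes S: "Schanuel" and indep: "Q_lin_indep_list zs" and "algebraic a" "a \<noteq> 1"
    and range: "set zs \<union> exp ` set zs \<subseteq> insert u (insert (a * u) (set rs)) \<union> Collect algebraic"
    and len: "length zs = Suc (length rs)"
  obtains k where "k = 1 \<or> k = a" "Q_alg_indep (set (k * u # rs))" "distinct (k * u # rs)"
proof -
  obtain T where T: "T \<subseteq> set zs \<union> exp ` set zs" "card T = length zs" "Q_alg_indep T"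
    using schanuel_list[OF S indep] by blast
  have "T \<subseteq> insert u (insert (a * u) (set rs))"
    using T(1) range alg_indep_transcendental[OF T(3)] by blast
  then obtain k where k: "k = 1 \<or> k = a" "T \<subseteq> insert (k * u) (set rs)"
    using alg_indep_keeps_one_multiple[OF T(3) _ \<open>algebraic a\<close> \<open>a \<noteq> 1\<close>] by blast
  then have "T = set (k * u # rs) \<and> distinct (k * u # rs)"
    using T(2) len by (intro subset_set_card_length) auto
  with k(1) T(3) that show ?thesis by auto
qed

section \<open>The Gelfond-Schneider theorem from Schanuel's conjecture\<close>

text \<open>If exp l is algebraic (l \<noteq> 0) and b is algebraic and irrational, then exp (b * l)
  is transcendental: l and b * l are linearly independent, so Schanuel's conjecture yields
  two algebraically independent numbers among l, b * l and the two exponentials.\<close>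
lemma gelfond_schneider_from_schanuel:
  fixes l b :: complex
  assumes S: "Schanuel" and "l \<noteq> 0" and alg_exp_l: "algebraic (exp l)"
    and alg_b: "algebraic b" and irr_b: "b \<notin> \<rat>"
  shows "\<not> algebraic (exp (b * l))"
proof
  assume alg_exp_bl: "algebraic (exp (b * l))"
  have "b * l \<notin> Qvec.span {l}"
  proof
    assume "b * l \<in> Qvec.span {l}"
    then obtain r where "b * l = of_rat r * l" by (auto simp: Qvec.span_singleton)
    then have "b = of_rat r" using \<open>l \<noteq> 0\<close> by simp
    with irr_b show False by simp
  qed
  then have indep: "Q_lin_indep_list [l, b * l]"
    using Q_lin_indep_list_snoc[OF Q_lin_indep_list_single[OF \<open>l \<noteq> 0\<close>]] by simp
  obtain T where T: "T \<subseteq> set [l, b * l] \<union> exp ` set [l, b * l]"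
    "card T = length [l, b * l]" "Q_alg_indep T"
    using schanuel_list[OF S indep] by blast
  have sub: "T \<subseteq> insert l (insert (b * l) {})"
    using T(1) alg_indep_transcendental[OF T(3)] alg_exp_l alg_exp_bl by auto
  have "b \<noteq> 1" using irr_b by auto
  then obtain k where "T \<subseteq> {k * l}"
    using alg_indep_keeps_one_multiple[OF T(3) sub alg_b] by blast
  then have "card T \<le> card {k * l}" by (intro card_mono) auto
  with T(2) show False by simp
qed

section \<open>The case of an algebraic irrational base\<close>

context
  fixes x L a b :: complex
  assumes schanuel: "Schanuel"
    and exp_L: "exp L = a" and exp_x: "exp x = b"
    and alg_a: "algebraic a" and irr_a: "a \<notin> \<rat>"
    and alg_exp_ax: "algebraic (exp (a * x))" and alg_exp_bL: "algebraic (exp (b * L))"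
    and x_nz: "x \<noteq> 0" and L_nz: "L \<noteq> 0"
begin

lemma a_nz: "a \<noteq> 0"
  using exp_L by auto

lemma a_ne_1: "a \<noteq> 1"
  using irr_a by auto

text \<open>b is transcendental, by Gelfond-Schneider applied to a * x and the exponent 1/a.\<close>
lemma transcendental_b: "\<not> algebraic b"
proof -
  have "\<not> algebraic (exp (inverse a * (a * x)))"
    by (rule gelfond_schneider_from_schanuel[OF schanuel])
       (use alg_exp_ax alg_a irr_a a_nz x_nz in auto)
  moreover have "inverse a * (a * x) = x" using a_nz by simp
  ultimately show ?thesis using exp_x by simp
qed

text \<open>Among a * x, L, x, b * L, Schanuel's conjecture produces algebraically independent
  sets containing b, while keeping at most one of x and a * x; their elements then satisfy
  a relation (b - r) * v = c * w excluded above.  In the first case a * x and L are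
  linearly independent, and so is x with them, since exp x is transcendental.\<close>
lemma independent_case:
  assumes indep2: "Q_lin_indep_list [a * x, L]"
  shows False
proof -
  have "x \<notin> Qvec.span {a * x, L}"
  proof
    assume "x \<in> Qvec.span {a * x, L}"
    then have "algebraic (exp x)"
      by (rule algebraic_exp_span) (use alg_exp_ax exp_L alg_a in auto)
    with transcendental_b exp_x show False by simp
  qed
  then have indep3: "Q_lin_indep_list [a * x, L, x]"
    using Q_lin_indep_list_snoc[OF indep2] by simp
  show False
  proof (cases "Q_lin_indep_list [a * x, L, x, b * L]")
    case True
    have "set [a * x, L, x, b * L] \<union> exp ` set [a * x, L, x, b * L]
            \<subseteq> insert x (insert (a * x) (set [L, b * L, b])) \<union> Collect algebraic"
      using alg_exp_ax alg_exp_bL alg_a exp_L exp_x by auto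
    moreover have "length [a * x, L, x, b * L] = Suc (length [L, b * L, b])" by simp
    ultimately obtain k where k: "Q_alg_indep (set [k * x, L, b * L, b])" "distinct [k * x, L, b * L, b]"
      using schanuel_keep_one_multiple[OF schanuel True alg_a a_ne_1] by blast
    then show False
      using alg_indep_no_shifted_product[OF k(1), of b L "b * L" 1 0] by auto
  next
    case False
    then have "b * L \<in> Qvec.span {a * x, L, x}"
      using Q_lin_indep_list_snoc[OF indep3, of "b * L"] by auto
    then obtain p0 p1 p2 where "b * L = of_rat p0 * (a * x) + of_rat p1 * L + of_rat p2 * x"
      using Qvec_span_list[of "b * L" "[a * x, L, x]"] by (auto simp: eval_nat_numeral)
    then have rel: "(b - of_rat p1) * L = (of_rat p0 * a + of_rat p2) * x"
      by (simp add: algebra_simps)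
    have "set [a * x, L, x] \<union> exp ` set [a * x, L, x]
            \<subseteq> insert x (insert (a * x) (set [L, b])) \<union> Collect algebraic"
      using alg_exp_ax alg_a exp_L exp_x by auto
    moreover have "length [a * x, L, x] = Suc (length [L, b])" by simp
    ultimately obtain k where k: "k = 1 \<or> k = a" "Q_alg_indep (set [k * x, L, b])" "distinct [k * x, L, b]"
      using schanuel_keep_one_multiple[OF schanuel indep3 alg_a a_ne_1] by blast
    have "(b - of_rat p1) * L \<noteq> ((of_rat p0 * a + of_rat p2) / k) * (k * x)"
      by (rule alg_indep_no_shifted_product[OF k(2)])
         (use k(1,3) alg_a in \<open>auto intro!: algebraic_divide algebraic_add algebraic_mult algebraic_of_rat\<close>)
    with rel k(1) a_nz show False by auto
  qed
qed

text \<open>In the second case L is a rational multiple r * (a * x).  Then x and a * x are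
  independent, and either b * L is independent of them, which leads to an excluded relation
  as before, or b * L = r * a * b * x is a rational combination of x and a * x, making b
  algebraic.\<close>
lemma dependent_case:
  assumes dep2: "\<not> Q_lin_indep_list [a * x, L]"
  shows False
proof -
  have "L \<in> Qvec.span {a * x}"
    using dep2 Q_lin_indep_list_snoc[OF Q_lin_indep_list_single, of "a * x" L] a_nz x_nz by auto
  then obtain r where L: "L = of_rat r * (a * x)"
    by (auto simp: Qvec.span_singleton)
  have r_nz: "of_rat r \<noteq> (0::complex)" using L L_nz by auto
  have "a * x \<notin> Qvec.span {x}"
  proof
    assume "a * x \<in> Qvec.span {x}"
    then obtain s where "a * x = of_rat s * x" by (auto simp: Qvec.span_singleton)
    with x_nz irr_a show False by simp
  qed
  then have indep2: "Q_lin_indep_list [x, a * x]"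
    using Q_lin_indep_list_snoc[OF Q_lin_indep_list_single[OF x_nz]] by simp
  show False
  proof (cases "Q_lin_indep_list [x, a * x, b * L]")
    case True
    have "set [x, a * x, b * L] \<union> exp ` set [x, a * x, b * L]
            \<subseteq> insert x (insert (a * x) (set [b * L, b])) \<union> Collect algebraic"
      using alg_exp_ax alg_exp_bL exp_x by auto
    moreover have "length [x, a * x, b * L] = Suc (length [b * L, b])" by simp
    ultimately obtain k where k: "k = 1 \<or> k = a" "Q_alg_indep (set [k * x, b * L, b])" "distinct [k * x, b * L, b]"
      using schanuel_keep_one_multiple[OF schanuel True alg_a a_ne_1] by blast
    have "(b - of_rat 0) * (k * x) \<noteq> (k / (of_rat r * a)) * (b * L)"
      by (rule alg_indep_no_shifted_product[OF k(2)])
         (use k(1,3) alg_a in \<open>auto intro!: algebraic_divide algebraic_mult algebraic_of_rat\<close>)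
    with L r_nz a_nz show False by (simp add: field_simps)
  next
    case False
    then have "b * L \<in> Qvec.span {x, a * x}"
      using Q_lin_indep_list_snoc[OF indep2, of "b * L"] by auto
    then obtain p0 p1 where "b * L = of_rat p0 * x + of_rat p1 * (a * x)"
      using Qvec_span_list[of "b * L" "[x, a * x]"] by (auto simp: eval_nat_numeral)
    then have "(b * (of_rat r * a)) * x = (of_rat p0 + of_rat p1 * a) * x"
      using L by (simp add: algebra_simps)
    then have "b * (of_rat r * a) = of_rat p0 + of_rat p1 * a"
      using x_nz by simp
    then have "b = (of_rat p0 + of_rat p1 * a) / (of_rat r * a)"
      using r_nz a_nz by (simp add: field_simps)
    moreover have "algebraic ((of_rat p0 + of_rat p1 * a) / (of_rat r * a))"
      using alg_a by (intro algebraic_divide algebraic_add algebraic_mult algebraic_of_rat)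
    ultimately show False using transcendental_b by simp
  qed
qed

lemma irrational_base_contradiction: False
  using independent_case dependent_case by blast

end

text \<open>For
  rational a, exp x is a rational power of exp (a * x), hence b is algebraic, and
  Gelfond-Schneider applies to L and b.\<close>
lemma no_algebraic_exp_pair:
  fixes x L a b :: complex
  assumes S: "Schanuel" and exp_L: "exp L = a" and exp_x: "exp x = b"
    and alg_a: "algebraic a" and irr: "a \<notin> \<rat> \<or> b \<notin> \<rat>"
    and alg_exp_ax: "algebraic (exp (a * x))" and alg_exp_bL: "algebraic (exp (b * L))"
    and x_nz: "x \<noteq> 0" and L_nz: "L \<noteq> 0"
  shows False
proof (cases "a \<in> \<rat>")
  case True
  then obtain r where r: "a = of_rat r" by (auto elim: Rats_cases)
  have "a \<noteq> 0" using exp_L by auto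
  then have "x = of_rat (1 / r) * (a * x)" using r by (simp add: of_rat_divide)
  then have "x \<in> Qvec.span {a * x}" by (metis Qvec_span_scale Qvec.span_base singletonI)
  then have "algebraic b"
    using algebraic_exp_span[of x "{a * x}"] alg_exp_ax exp_x by auto
  then have "\<not> algebraic (exp (b * L))"
    using gelfond_schneider_from_schanuel[OF S L_nz] exp_L alg_a True irr by auto
  with alg_exp_bL show False by contradiction
next
  case False
  show False
    by (rule irrational_base_contradiction[OF S exp_L exp_x alg_a False alg_exp_ax alg_exp_bL x_nz L_nz])
qed

text \<open>With x = gamma * log beta and b = exp x = beta^gamma, the hypotheses are symmetric under
  exchanging (alpha, log alpha) with (b, x); so we may apply the core statement with whichever
  of alpha and b is algebraic in the role of a.\<close>
theorem mainTheorem3: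
  fixes \<alpha> \<beta> \<gamma> log\<alpha> log\<beta> :: complex
  assumes S: "Schanuel"
    and "\<alpha> \<noteq> 0" "\<beta> \<noteq> 0" "\<gamma> \<noteq> 0"
    and log\<alpha>: "exp log\<alpha> = \<alpha>" and "exp log\<beta> = \<beta>"
    and a1: "\<alpha> \<noteq> 1" and bg1: "exp (\<gamma> * log\<beta>) \<noteq> 1"
    and irr: "\<alpha> \<notin> \<rat> \<or> exp (\<gamma> * log\<beta>) \<notin> \<rat>"
    and alg: "algebraic \<alpha> \<or> algebraic (exp (\<gamma> * log\<beta>))"
    and alg_bga: "algebraic (exp (\<gamma> * \<alpha> * log\<beta>))"
  shows "\<not> algebraic (exp (exp (\<gamma> * log\<beta>) * log\<alpha>))"
proof
  define x where "x = \<gamma> * log\<beta>"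
  assume alg_exp_bL: "algebraic (exp (exp (\<gamma> * log\<beta>) * log\<alpha>))"
  then have alg_exp_bL': "algebraic (exp (exp x * log\<alpha>))" by (simp add: x_def)
  have alg_exp_ax: "algebraic (exp (\<alpha> * x))" using alg_bga by (simp add: x_def mult_ac)
  have x_nz: "x \<noteq> 0" using bg1 by (auto simp: x_def)
  have L_nz: "log\<alpha> \<noteq> 0" using a1 log\<alpha> by auto
  show False
  proof (cases "algebraic \<alpha>")
    case True
    show False
      by (rule no_algebraic_exp_pair[OF S log\<alpha> refl True _ alg_exp_ax alg_exp_bL' x_nz L_nz])
         (use irr in \<open>simp add: x_def\<close>)
  next
    case False
    with alg have "algebraic (exp x)" by (simp add: x_def)
    show False
      by (rule no_algebraic_exp_pair[OF S refl log\<alpha> \<open>algebraic (exp x)\<close> _ alg_exp_bL' alg_exp_ax L_nz x_nz])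
         (use irr in \<open>auto simp: x_def\<close>)
  qed
qed

end
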